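(* Let $\alpha>2$, and for $s_1,s_2>0$ define \[ f(s_1,s_2)=\frac{\int_0^\infty e^{-(s_1+s_2)x^{2/\alpha}}\frac{dx}{1+x}}{s_1\int_0^\infty x^{2/\alpha}e^{-(s_1+s_2)x^{2/\alpha}}\frac{dx}{1+x}}. \] Then for each fixed $s_1>0$, the function $s_2\mapsto f(s_1,s_2)$ is monotonically increasing on $(0,\infty)$. *)

theory Defs
  imports "HOL-Analysis.Analysis"
begin

definition f_ratio :: "real \<Rightarrow> real \<Rightarrow> real \<Rightarrow> real" where
  "f_ratio \<alpha> s1 s2 =
     (LBINT x:{0<..}. exp (- (s1 + s2) * x powr (2 / \<alpha>)) / (1 + x)) /
     (s1 * (LBINT x:{0<..}. x powr (2 / \<alpha>) * exp (- (s1 + s2) * x powr (2 / \<alpha>)) / (1 + x)))"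

end

(*
  Put t = s1 + s2, y = x powr (2 / alpha) and d\<mu> = dx / (1 + x) on (0, \<infinity>). Then
  f = A t / (s1 * B t) with A t = \<integral> exp (- t y) d\<mu> and B t = \<integral> y exp (- t y) d\<mu>, and
  B t / A t is the mean of y under the tilted measure exp (- t y) d\<mu> / A t. Raising t
  tilts mass towards small y, so this mean decreases: for t1 \<le> t2, integrate
  (y - c) (exp (- (t2 - t1) y) - exp (- (t2 - t1) c)) \<le> 0 against exp (- t1 y) d\<mu>, where c
  is the mean at t1. All integrals exist because both integrands are bounded by
  multiples of x powr (- 2 / alpha) / (1 + x), which is integrable as 2 / alpha < 1.
*)

theory Submission
  imports Defs
begin

lemma exp_neg_le_inverse:
  fixes u :: real assumes "u > 0" shows "exp (- u) \<le> 1 / u"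
proof -
  have "u \<le> exp u" using exp_ge_add_one_self[of u] by linarith
  with assms show ?thesis by (simp add: exp_minus field_simps)
qed

lemma exp_neg_le_four_div_square:
  fixes u :: real assumes "u > 0" shows "exp (- u) \<le> 4 / u\<^sup>2"
proof -
  have "u / 2 \<le> exp (u / 2)" using exp_ge_add_one_self[of "u / 2"] by linarith
  then have "(u / 2)\<^sup>2 \<le> (exp (u / 2))\<^sup>2" using assms by (intro power_mono) auto
  also have "\<dots> = exp u" by (simp add: power2_eq_square flip: exp_add)
  finally show ?thesis using assms by (simp add: exp_minus field_simps power2_eq_square)
qed

lemma mult_diff_antimono_nonpos:
  fixes g :: "real \<Rightarrow> real" assumes "antimono g"
  shows "(a - b) * (g a - g b) \<le> 0"
  using assms by (cases "a \<le> b") (auto simp: antimono_def mult_nonpos_nonneg mult_nonneg_nonpos)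

lemma set_integral_pos_of_pos:
  fixes F :: "real \<Rightarrow> real"
  assumes int: "set_integrable lborel {a<..} F" and pos: "\<And>x. x > a \<Longrightarrow> F x > 0"
  shows "(LBINT x:{a<..}. F x) > 0"
proof -
  have nonneg: "AE x in lborel. 0 \<le> indicator {a<..} x * F x"
    using pos by (intro AE_I2) (auto simp: indicator_def less_imp_le)
  have "(LBINT x:{a<..}. F x) \<noteq> 0"
  proof
    assume "(LBINT x:{a<..}. F x) = 0"
    then have "AE x in lborel. indicator {a<..} x * F x = 0"
      using int nonneg by (simp add: set_lebesgue_integral_def set_integrable_def integral_nonneg_eq_0_iff_AE)
    then have "AE x in lborel. x \<notin> {a<..}"
      by eventually_elim (auto simp: indicator_def split: if_splits dest: pos)
    then have "{a<..} \<in> null_sets lborel"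
      by (simp add: AE_iff_null_sets)
    then have "{a<..a + 1} \<in> null_sets lborel"
      by (rule null_sets_subset) auto
    then show False
      by (simp add: null_sets_def)
  qed
  moreover have "(LBINT x:{a<..}. F x) \<ge> 0"
    using nonneg by (simp add: set_lebesgue_integral_def integral_nonneg_AE)
  ultimately show ?thesis by linarith
qed

lemma exp_tilted_mean_antimono:
  fixes M :: "'a measure" and w y :: "'a \<Rightarrow> real"
  assumes "t1 \<le> t2" and w_nonneg: "\<And>x. 0 \<le> w x"
    and int: "\<And>t. t \<in> {t1, t2} \<Longrightarrow> integrable M (\<lambda>x. w x * exp (- t * y x))"
             "\<And>t. t \<in> {t1, t2} \<Longrightarrow> integrable M (\<lambda>x. w x * (y x * exp (- t * y x)))"
    and pos: "(\<integral>x. w x * exp (- t1 * y x) \<partial>M) > 0"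
  shows "(\<integral>x. w x * exp (- t1 * y x) \<partial>M) * (\<integral>x. w x * (y x * exp (- t2 * y x)) \<partial>M)
       \<le> (\<integral>x. w x * exp (- t2 * y x) \<partial>M) * (\<integral>x. w x * (y x * exp (- t1 * y x)) \<partial>M)"
proof -
  define A where "A t = (\<integral>x. w x * exp (- t * y x) \<partial>M)" for t
  define B where "B t = (\<integral>x. w x * (y x * exp (- t * y x)) \<partial>M)" for t
  define c where "c = B t1 / A t1"
  define g where "g u = exp (- (t2 - t1) * u)" for u
  have cA: "c * A t1 = B t1"
    using pos by (simp add: c_def A_def)
  have "antimono g"
    using \<open>t1 \<le> t2\<close> by (intro antimonoI) (simp add: g_def mult_left_mono_neg)
  (* after integration the terms with g c cancel, because c is the mean of y at t1 *)
  have pointwise: "0 \<le> g c * (w x * (y x * exp (- t1 * y x))) - c * g c * (w x * exp (- t1 * y x))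
      - w x * (y x * exp (- t2 * y x)) + c * (w x * exp (- t2 * y x))" for x
  proof -
    have "0 \<le> w x * exp (- t1 * y x) * - ((y x - c) * (g (y x) - g c))"
      using w_nonneg mult_diff_antimono_nonpos[OF \<open>antimono g\<close>] by (intro mult_nonneg_nonneg) auto
    moreover have "g (y x) * exp (- t1 * y x) = exp (- t2 * y x)"
      by (simp add: g_def algebra_simps flip: exp_add)
    ultimately show ?thesis by (simp add: algebra_simps)
  qed
  have "0 \<le> (\<integral>x. g c * (w x * (y x * exp (- t1 * y x))) - c * g c * (w x * exp (- t1 * y x))
      - w x * (y x * exp (- t2 * y x)) + c * (w x * exp (- t2 * y x)) \<partial>M)"
    using pointwise by (intro integral_nonneg_AE) auto
  also have "\<dots> = g c * B t1 - c * g c * A t1 - B t2 + c * A t2"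
    using int by (simp add: A_def B_def)
  finally have "0 \<le> g c * B t1 - c * g c * A t1 - B t2 + c * A t2" .
  moreover have "c * g c * A t1 = g c * B t1"
    using cA by (simp add: algebra_simps)
  ultimately have "B t2 \<le> c * A t2"
    by linarith
  then have "A t1 * B t2 \<le> A t1 * (c * A t2)"
    using pos by (simp add: A_def)
  also have "\<dots> = A t2 * B t1"
    using cA by (simp add: algebra_simps)
  finally show ?thesis
    by (simp add: A_def B_def)
qed

lemma set_integrable_lborel_of_lebesgue:
  fixes f :: "real \<Rightarrow> real"
  assumes "set_integrable lebesgue A f" "f \<in> borel_measurable lborel" "A \<in> sets lborel"
  shows "set_integrable lborel A f"
  using assms unfolding set_integrable_def
  by (subst (asm) integrable_completion) auto

lemma set_integrable_powr_neg_div_one_plus: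
  fixes p :: real assumes p: "0 < p" "p < 1"
  shows "set_integrable lborel {0<..} (\<lambda>x. x powr (- p) / (1 + x))"
proof -
  have meas: "set_borel_measurable lebesgue S (\<lambda>x::real. x powr (- p) / (1 + x))"
    if [measurable]: "S \<in> sets borel" for S
    unfolding set_borel_measurable_def by (intro measurable_completion) measurable
  have "set_integrable lebesgue {0<..1} (\<lambda>x::real. x powr (- p))"
    using p by (intro nonnegative_absolutely_integrable_1 integrable_on_powr_from_0') auto
  then have near_0: "set_integrable lebesgue {0<..1} (\<lambda>x::real. x powr (- p) / (1 + x))"
    by (rule set_integrable_bound[OF _ meas]) (auto intro!: AE_I2 simp: divide_le_eq)
  have "set_integrable lebesgue {1..} (\<lambda>x::real. x powr (- 1 - p))"
    using p has_integral_powr_to_inf[of "- 1 - p" 1]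
    by (intro nonnegative_absolutely_integrable_1) (auto simp: integrable_on_def)
  moreover have "x powr (- p) / (1 + x) \<le> x powr (- 1 - p)" if "x \<ge> 1" for x :: real
  proof -
    have "x powr (- p) / (1 + x) \<le> x powr (- p) / x"
      using that by (intro divide_left_mono) auto
    also have "\<dots> = x powr (- 1 - p)"
      using that by (simp add: powr_diff powr_minus divide_simps)
    finally show ?thesis .
  qed
  ultimately have near_infinity: "set_integrable lebesgue {1..} (\<lambda>x::real. x powr (- p) / (1 + x))"
    by (intro set_integrable_bound[OF _ meas] AE_I2) auto
  have "{0<..1} \<union> {1..} = {0::real<..}" by auto
  then have "set_integrable lebesgue {0<..} (\<lambda>x::real. x powr (- p) / (1 + x))"
    using set_integrable_Un[OF near_0 near_infinity] by auto
  then show ?thesis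
    by (rule set_integrable_lborel_of_lebesgue) auto
qed

lemma set_integrable_div_one_plus_of_le_powr:
  fixes F :: "real \<Rightarrow> real" and p C :: real
  assumes p: "0 < p" "p < 1" and F: "F \<in> borel_measurable lborel"
    and bound: "\<And>x. x > 0 \<Longrightarrow> \<bar>F x\<bar> \<le> C * x powr (- p)"
  shows "set_integrable lborel {0<..} (\<lambda>x. F x / (1 + x))"
proof (rule set_integrable_bound)
  show "set_integrable lborel {0<..} (\<lambda>x. C * (x powr (- p) / (1 + x)))"
    using set_integrable_powr_neg_div_one_plus[OF p] by (rule set_integrable_mult_right)
  show "set_borel_measurable lborel {0<..} (\<lambda>x. F x / (1 + x))"
    unfolding set_borel_measurable_def using F by measurable
  have "norm (F x / (1 + x)) \<le> norm (C * (x powr (- p) / (1 + x)))" if "x > 0" for x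
  proof -
    have "\<bar>F x / (1 + x)\<bar> \<le> C * (x powr (- p) / (1 + x))"
      using divide_right_mono[OF bound[OF that], of "1 + x"] that by (simp add: abs_div)
    then show ?thesis
      unfolding real_norm_def using abs_ge_self[of "C * (x powr (- p) / (1 + x))"] by linarith
  qed
  then show "AE x in lborel. x \<in> {0<..} \<longrightarrow> norm (F x / (1 + x)) \<le> norm (C * (x powr (- p) / (1 + x)))"
    by (intro AE_I2) auto
qed

lemma exp_powr_kernel_bounds:
  fixes p t x :: real assumes "0 < p" "0 < t" "0 < x"
  shows "exp (- t * x powr p) \<le> 1 / t * x powr (- p)"
    and "x powr p * exp (- t * x powr p) \<le> 4 / t\<^sup>2 * x powr (- p)"
proof -
  have u: "0 < t * x powr p" using assms by simp
  show "exp (- t * x powr p) \<le> 1 / t * x powr (- p)"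
    using exp_neg_le_inverse[OF u] assms by (simp add: powr_minus field_simps)
  have "x powr p * exp (- t * x powr p) \<le> x powr p * (4 / (t * x powr p)\<^sup>2)"
    using exp_neg_le_four_div_square[OF u] assms by (intro mult_left_mono) auto
  also have "\<dots> = 4 / t\<^sup>2 * x powr (- p)"
    using assms by (simp add: powr_minus field_simps power2_eq_square)
  finally show "x powr p * exp (- t * x powr p) \<le> 4 / t\<^sup>2 * x powr (- p)" .
qed

lemma set_integrable_exp_powr_div_one_plus:
  fixes p t :: real assumes p: "0 < p" "p < 1" and "0 < t"
  shows "set_integrable lborel {0<..} (\<lambda>x. exp (- t * x powr p) / (1 + x))"
    and "set_integrable lborel {0<..} (\<lambda>x. x powr p * exp (- t * x powr p) / (1 + x))"
proof -
  note bounds = exp_powr_kernel_bounds[OF p(1) \<open>0 < t\<close>]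
  show "set_integrable lborel {0<..} (\<lambda>x. exp (- t * x powr p) / (1 + x))"
    by (rule set_integrable_div_one_plus_of_le_powr[OF p, where C = "1 / t"]) (use bounds(1) in auto)
  show "set_integrable lborel {0<..} (\<lambda>x. x powr p * exp (- t * x powr p) / (1 + x))"
    by (rule set_integrable_div_one_plus_of_le_powr[OF p, where C = "4 / t\<^sup>2"]) (use bounds(2) in auto)
qed

lemma set_integral_exp_powr_div_one_plus_pos:
  fixes p t :: real assumes "0 < p" "p < 1" "0 < t"
  shows "(LBINT x:{0<..}. exp (- t * x powr p) / (1 + x)) > 0"
    and "(LBINT x:{0<..}. x powr p * exp (- t * x powr p) / (1 + x)) > 0"
  using assms set_integrable_exp_powr_div_one_plus[OF assms]
  by (auto intro!: set_integral_pos_of_pos)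

lemma set_integral_div_eq_weighted:
  fixes g h :: "'a \<Rightarrow> real"
  shows "(LINT x:S|M. g x / h x) = (\<integral>x. indicator S x / h x * g x \<partial>M)"
  unfolding set_lebesgue_integral_def by (simp add: field_simps)

lemma set_integrable_div_iff_weighted:
  fixes g h :: "'a \<Rightarrow> real"
  shows "set_integrable M S (\<lambda>x. g x / h x) \<longleftrightarrow> integrable M (\<lambda>x. indicator S x / h x * g x)"
  unfolding set_integrable_def by (simp add: field_simps)

lemma set_integral_exp_powr_ratio_antimono:
  fixes p t1 t2 :: real assumes p: "0 < p" "p < 1" and t: "0 < t1" "t1 \<le> t2"
  shows "(LBINT x:{0<..}. exp (- t1 * x powr p) / (1 + x))
           * (LBINT x:{0<..}. x powr p * exp (- t2 * x powr p) / (1 + x))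
       \<le> (LBINT x:{0<..}. exp (- t2 * x powr p) / (1 + x))
           * (LBINT x:{0<..}. x powr p * exp (- t1 * x powr p) / (1 + x))"
proof -
  have t_pos: "0 < t" if "t \<in> {t1, t2}" for t
    using that t by auto
  show ?thesis
    unfolding set_integral_div_eq_weighted
  proof (rule exp_tilted_mean_antimono[where y = "\<lambda>x. x powr p"])
    show "integrable lborel (\<lambda>x. indicator {0<..} x / (1 + x) * exp (- t * x powr p))"
      and "integrable lborel (\<lambda>x. indicator {0<..} x / (1 + x) * (x powr p * exp (- t * x powr p)))"
      if "t \<in> {t1, t2}" for t
      using set_integrable_exp_powr_div_one_plus[OF p t_pos[OF that]]
      unfolding set_integrable_div_iff_weighted by auto
    show "0 < (\<integral>x. indicator {0<..} x / (1 + x) * exp (- t1 * x powr p) \<partial>lborel)"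
      using set_integral_exp_powr_div_one_plus_pos(1)[OF p t(1)]
      unfolding set_integral_div_eq_weighted .
  qed (use t in \<open>auto simp: indicator_def\<close>)
qed

theorem lemma3:
  fixes \<alpha> s1 :: real
  assumes "\<alpha> > 2" and "s1 > 0"
  shows "mono_on {0<..} (\<lambda>s2. f_ratio \<alpha> s1 s2)"
proof (rule mono_onI)
  fix r s :: real
  assume "r \<in> {0<..}" "s \<in> {0<..}" "r \<le> s"
  define p where "p = 2 / \<alpha>"
  have p: "0 < p" "p < 1"
    using assms by (auto simp: p_def)
  have t: "0 < s1 + r" "s1 + r \<le> s1 + s"
    using \<open>s1 > 0\<close> \<open>r \<in> {0<..}\<close> \<open>r \<le> s\<close> by auto
  have "0 < (LBINT x:{0<..}. x powr p * exp (- (s1 + r) * x powr p) / (1 + x))"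
    by (rule set_integral_exp_powr_div_one_plus_pos(2)[OF p t(1)])
  moreover have "0 < (LBINT x:{0<..}. x powr p * exp (- (s1 + s) * x powr p) / (1 + x))"
    by (rule set_integral_exp_powr_div_one_plus_pos(2)[OF p]) (use t in linarith)
  ultimately show "f_ratio \<alpha> s1 r \<le> f_ratio \<alpha> s1 s"
    using set_integral_exp_powr_ratio_antimono[OF p t] \<open>s1 > 0\<close>
    unfolding f_ratio_def p_def[symmetric] by (simp add: divide_simps mult.assoc)
qed

end
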